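(* Let $f:U\to\mathbb{R}^3$ be a Guichard net with Lamé coefficients $H_1,H_2,H_3$ and let $\bar f$ be a Combescure transform of $f$ with Lamé coefficients $\bar H_1,\bar H_2,\bar H_3$ which is an $\alpha^2|\bar f|^2$-system, $\alpha\in\mathbb{R}\setminus\{0\}$. Then the 1-parameter family of Ribaucour transformations of $f$ induced by $\bar f$ contains exactly one Guichard net $\mathcal{R}(f)$, namely the one given by $$\mathcal{R}(f)=f-\frac{2\varphi}{|\bar f|^2}\bar f,\qquad \mathcal{R}(H_i)=H_i-\frac{2\varphi}{|\bar f|^2}\bar H_i,$$ where $\varphi:=\frac1{\alpha^2}\{H_1\bar H_1+H_2\bar H_2-H_3\bar H_3\}$.
   Context: $U\subset\mathbb{R}^3$ open connected, coordinates $(x_1,x_2,x_3)$, $\partial_i=\partial_{x_i}$. A triply orthogonal system is $f:U\to\mathbb{R}^3$ with $\det(\partial_1f,\partial_2f,\partial_3f)\ne0$ and $(\partial_if,\partial_jf)=0$ for $i\ne j$. For $(i,j,k)$ cyclic, $N_i=\partial_jf\times\partial_kf/|\partial_jf\times\partial_kf|$, Lamé coefficients $H_i$ by $\partial_if=H_iN_i$, rotational coefficients $\beta_{ij}=\frac1{H_i}\partial_iH_j$. A Combescure transform of $f$ is a triply orthogonal system $\bar f$ with the same rotational coefficients, $\partial_i\bar f=\bar H_iN_i$ (Lamé coefficients $\bar H_i$ taken with respect to the same $N_i$). A $\chi$-system is one with $H_1^2+H_2^2-H_3^2=\chi$; a Guichard net is a $0$-system; an $\alpha^2|\bar f|^2$-system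 is one with $\bar H_1^2+\bar H_2^2-\bar H_3^2=\alpha^2|\bar f|^2$. Induced Ribaucour transforms: given a Combescure transform $\bar f$ of $f$, put $\gamma_i:=\bar f\cdot N_i$ (so $|\bar f|^2=\gamma_1^2+\gamma_2^2+\gamma_3^2$). For every solution $\varphi$ of $\partial_i\varphi=H_i\gamma_i$ ($i=1,2,3$; such solutions exist and are unique up to an additive constant), the map $f'=f-\frac{2\varphi}{|\bar f|^2}\bar f$, with Lamé coefficients $H'_i=H_i-\frac{2\varphi}{|\bar f|^2}\bar H_i$, is a Ribaucour transform of $f$ (corresponding coordinate surfaces envelop a common sphere congruence with corresponding curvature lines); these form the 1-parameter family of Ribaucour transforms induced by $\bar f$. Such $f'$ is a Guichard net if $H_1'^2+H_2'^2-H_3'^2=0$. *)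

theory Defs
  imports "HOL-Analysis.Analysis"
begin

text \<open>Coordinates on R^3 are indexed by the numeral type 3 (elements 1, 2, 3 = 0),
  which carries arithmetic mod 3, so (i, i+1, i+2) is the cyclic triple.\<close>

definition pd :: "3 \<Rightarrow> (real^3 \<Rightarrow> 'b::real_normed_vector) \<Rightarrow> real^3 \<Rightarrow> 'b" where
  "pd i g x = frechet_derivative g (at x) (axis i 1)"

fun iter_pd :: "3 list \<Rightarrow> (real^3 \<Rightarrow> 'b::real_normed_vector) \<Rightarrow> real^3 \<Rightarrow> 'b" where
  "iter_pd [] g = g"
| "iter_pd (i # is) g = pd i (iter_pd is g)"

definition smooth_on :: "(real^3) set \<Rightarrow> (real^3 \<Rightarrow> 'b::real_normed_vector) \<Rightarrow> bool" where
  "smooth_on U g \<longleftrightarrow> (\<forall>is. iter_pd is g differentiable_on U)"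

definition triply_orthogonal :: "(real^3) set \<Rightarrow> (real^3 \<Rightarrow> real^3) \<Rightarrow> bool" where
  "triply_orthogonal U f \<longleftrightarrow> smooth_on U f
     \<and> (\<forall>x\<in>U. det (\<chi> i. pd i f x) \<noteq> 0)
     \<and> (\<forall>x\<in>U. \<forall>i j. i \<noteq> j \<longrightarrow> inner (pd i f x) (pd j f x) = 0)"

definition unitN :: "(real^3 \<Rightarrow> real^3) \<Rightarrow> 3 \<Rightarrow> real^3 \<Rightarrow> real^3" where
  "unitN f i x = (1 / norm (cross3 (pd (i+1) f x) (pd (i+2) f x))) *\<^sub>R cross3 (pd (i+1) f x) (pd (i+2) f x)"

text \<open>Lame coefficients H_i of f, determined by d_i f = H_i N_i.\<close>
definition lame :: "(real^3 \<Rightarrow> real^3) \<Rightarrow> 3 \<Rightarrow> real^3 \<Rightarrow> real" where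
  "lame f i x = inner (pd i f x) (unitN f i x)"

definition lame_wrt :: "(real^3 \<Rightarrow> real^3) \<Rightarrow> (real^3 \<Rightarrow> real^3) \<Rightarrow> 3 \<Rightarrow> real^3 \<Rightarrow> real" where
  "lame_wrt f fb i x = inner (pd i fb x) (unitN f i x)"

definition rotcoef :: "(3 \<Rightarrow> real^3 \<Rightarrow> real) \<Rightarrow> 3 \<Rightarrow> 3 \<Rightarrow> real^3 \<Rightarrow> real" where
  "rotcoef H i j x = pd i (H j) x / H i x"

definition guichard_coeffs :: "(3 \<Rightarrow> real^3 \<Rightarrow> real) \<Rightarrow> real^3 \<Rightarrow> bool" where
  "guichard_coeffs H x \<longleftrightarrow> (H 1 x)\<^sup>2 + (H 2 x)\<^sup>2 - (H 3 x)\<^sup>2 = 0"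

definition guichard_net :: "(real^3) set \<Rightarrow> (real^3 \<Rightarrow> real^3) \<Rightarrow> bool" where
  "guichard_net U f \<longleftrightarrow> triply_orthogonal U f \<and> (\<forall>x\<in>U. guichard_coeffs (lame f) x)"

definition combescure :: "(real^3) set \<Rightarrow> (real^3 \<Rightarrow> real^3) \<Rightarrow> (real^3 \<Rightarrow> real^3) \<Rightarrow> bool" where
  "combescure U f fb \<longleftrightarrow> triply_orthogonal U fb
     \<and> (\<forall>x\<in>U. \<forall>i. pd i fb x = lame_wrt f fb i x *\<^sub>R unitN f i x)
     \<and> (\<forall>x\<in>U. \<forall>i j. i \<noteq> j \<longrightarrow> rotcoef (lame_wrt f fb) i j x = rotcoef (lame f) i j x)"

definition alpha_sq_system :: "(real^3) set \<Rightarrow> (real^3 \<Rightarrow> real^3) \<Rightarrow> (real^3 \<Rightarrow> real^3) \<Rightarrow> real \<Rightarrow> bool" where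
  "alpha_sq_system U f fb \<alpha> \<longleftrightarrow> (\<forall>x\<in>U.
     (lame_wrt f fb 1 x)\<^sup>2 + (lame_wrt f fb 2 x)\<^sup>2 - (lame_wrt f fb 3 x)\<^sup>2 = \<alpha>\<^sup>2 * (norm (fb x))\<^sup>2)"

definition gam :: "(real^3 \<Rightarrow> real^3) \<Rightarrow> (real^3 \<Rightarrow> real^3) \<Rightarrow> 3 \<Rightarrow> real^3 \<Rightarrow> real" where
  "gam f fb i x = inner (fb x) (unitN f i x)"

definition rib_param :: "(real^3) set \<Rightarrow> (real^3 \<Rightarrow> real^3) \<Rightarrow> (real^3 \<Rightarrow> real^3) \<Rightarrow> (real^3 \<Rightarrow> real) \<Rightarrow> bool" where
  "rib_param U f fb \<phi> \<longleftrightarrow> (\<forall>x\<in>U. \<phi> differentiable (at x)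
      \<and> (\<forall>i. pd i \<phi> x = lame f i x * gam f fb i x))"

definition rib :: "(real^3 \<Rightarrow> real^3) \<Rightarrow> (real^3 \<Rightarrow> real^3) \<Rightarrow> (real^3 \<Rightarrow> real) \<Rightarrow> real^3 \<Rightarrow> real^3" where
  "rib f fb \<phi> x = f x - (2 * \<phi> x / (norm (fb x))\<^sup>2) *\<^sub>R fb x"

definition ribH :: "(real^3 \<Rightarrow> real^3) \<Rightarrow> (real^3 \<Rightarrow> real^3) \<Rightarrow> (real^3 \<Rightarrow> real) \<Rightarrow> 3 \<Rightarrow> real^3 \<Rightarrow> real" where
  "ribH f fb \<phi> i x = lame f i x - (2 * \<phi> x / (norm (fb x))\<^sup>2) * lame_wrt f fb i x"

end

theory Submission
  imports Defs
begin

text \<open>Write \<open>\<langle>a, b\<rangle> = a\<^sub>1 b\<^sub>1 + a\<^sub>2 b\<^sub>2 - a\<^sub>3 b\<^sub>3\<close> for the Lorentz form on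
  triples of Lame coefficients. Differentiating the Guichard condition \<open>\<langle>H, H\<rangle> = 0\<close> and the
  condition \<open>\<langle>Hb, Hb\<rangle> = \<alpha>\<^sup>2 |fb|\<^sup>2\<close>, and using that \<open>H\<close> and \<open>Hb\<close> have the same rotational
  coefficients, gives \<open>\<partial>\<^sub>i \<langle>H, Hb\<rangle> = \<alpha>\<^sup>2 H\<^sub>i \<gamma>\<^sub>i\<close>; so \<open>\<phi> = \<langle>H, Hb\<rangle> / \<alpha>\<^sup>2\<close> is an
  admissible parameter. For any parameter \<open>p\<close> and \<open>t = 2 p / |fb|\<^sup>2\<close>,
  \<open>\<langle>H - t Hb, H - t Hb\<rangle> = 4 \<alpha>\<^sup>2 p (p - \<phi>) / |fb|\<^sup>2\<close>, so the transform is Guichard exactly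
  where \<open>p \<in> {0, \<phi>}\<close>. Admissible parameters differ by constants on the connected \<open>U\<close>, and the
  parameter \<open>0\<close> would force every \<open>\<gamma>\<^sub>i\<close>, hence \<open>fb\<close>, to vanish; so \<open>\<phi>\<close> is the only one.\<close>

lemma numeral_3_wrap: "(4::3) = 1" "(5::3) = 2"
  by simp_all

lemma det_3_cyclic:
  fixes v :: "3 \<Rightarrow> real^3"
  shows "det (\<chi> i. v i) = inner (v j) (cross3 (v (j+1)) (v (j+2)))"
  using exhaust_3[of j] by (auto simp: cross3_simps numeral_3_wrap)

lemma det_scaleR_eq_cross3_expansion:
  fixes v :: "3 \<Rightarrow> real^3"
  shows "det (\<chi> i. v i) *\<^sub>R w = (\<Sum>j\<in>UNIV. inner w (cross3 (v (j+1)) (v (j+2))) *\<^sub>R v j)"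
  unfolding sum_3 vec_eq_iff forall_3 by (simp add: cross3_simps numeral_3_wrap)

lemma pd_eq_derivative: "(g has_derivative D) (at x) \<Longrightarrow> pd i g x = D (axis i 1)"
  unfolding pd_def using frechet_derivative_at by metis

lemma pd_cong_open:
  assumes "g differentiable (at x)" "open U" "x \<in> U" "\<And>y. y \<in> U \<Longrightarrow> g y = h y"
  shows "pd i g x = pd i h x"
  unfolding pd_def using frechet_derivative_transform_within_open[OF assms] by simp

lemma pd_const_mult:
  fixes g :: "real^3 \<Rightarrow> real"
  assumes "g differentiable (at x)"
  shows "pd i (\<lambda>y. c * g y) x = c * pd i g x"
  using pd_eq_derivative[OF has_derivative_mult_right[OF frechet_derivative_works[THEN iffD1, OF assms]]]
  unfolding pd_def .

lemma pd_norm_squared: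
  fixes g :: "real^3 \<Rightarrow> real^3"
  assumes "g differentiable (at x)"
  shows "pd i (\<lambda>y. (norm (g y))\<^sup>2) x = 2 * inner (g x) (pd i g x)"
proof -
  have "((\<lambda>y. inner (g y) (g y)) has_derivative
      (\<lambda>h. inner (g x) (frechet_derivative g (at x) h) + inner (frechet_derivative g (at x) h) (g x))) (at x)"
    using assms by (intro has_derivative_inner) (simp_all add: frechet_derivative_works)
  from pd_eq_derivative[OF this, of i] show ?thesis
    unfolding power2_norm_eq_inner by (simp add: pd_def inner_commute)
qed

lemma pd_eq_imp_diff_constant:
  fixes g h :: "real^3 \<Rightarrow> real"
  assumes "open U" "connected U"
    and "\<And>x. x \<in> U \<Longrightarrow> g differentiable (at x)" "\<And>x. x \<in> U \<Longrightarrow> h differentiable (at x)"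
    and "\<And>x i. x \<in> U \<Longrightarrow> pd i g x = pd i h x"
  obtains c where "\<And>x. x \<in> U \<Longrightarrow> g x - h x = c"
proof (cases "U = {}")
  case False
  then obtain x0 where "x0 \<in> U" by blast
  have "((\<lambda>y. g y - h y) has_derivative (\<lambda>v. 0)) (at x)" if x: "x \<in> U" for x
  proof -
    define D where "D v = frechet_derivative g (at x) v - frechet_derivative h (at x) v" for v
    have dD: "((\<lambda>y. g y - h y) has_derivative D) (at x)"
      unfolding D_def using assms(3,4)[OF x] by (intro has_derivative_diff) (simp_all add: frechet_derivative_works)
    have "D = (\<lambda>v. 0)"
    proof (rule linear_eq_stdbasis[OF has_derivative_linear[OF dD]])
      show "D b = 0" if "b \<in> Basis" for b :: "real^3"
        using that assms(5)[OF x] by (auto simp: Basis_vec_def D_def pd_def)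
    qed (rule linear_zero)
    then show ?thesis using dD by simp
  qed
  then have "g x - h x = g x0 - h x0" if "x \<in> U" for x
    using has_derivative_zero_unique_connected[OF assms(1,2)] \<open>x0 \<in> U\<close> that by blast
  then show ?thesis using that by blast
qed (use that in blast)

definition lorentz_inner :: "(3 \<Rightarrow> real) \<Rightarrow> (3 \<Rightarrow> real) \<Rightarrow> real" where
  "lorentz_inner a b = a 1 * b 1 + a 2 * b 2 - a 3 * b 3"

lemma guichard_coeffs_iff_lorentz: "guichard_coeffs H x \<longleftrightarrow> lorentz_inner (\<lambda>i. H i x) (\<lambda>i. H i x) = 0"
  by (simp add: guichard_coeffs_def lorentz_inner_def power2_eq_square)

lemma lorentz_inner_diff_scaled:
  "lorentz_inner (\<lambda>i. a i - t * b i) (\<lambda>i. a i - t * b i)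
     = lorentz_inner a a - 2 * t * lorentz_inner a b + t\<^sup>2 * lorentz_inner b b"
  by (simp add: lorentz_inner_def power2_eq_square algebra_simps)

lemma lorentz_inner_product_rule_identity:
  fixes a b da db :: "3 \<Rightarrow> real"
  assumes "a i \<noteq> 0" "b i \<noteq> 0" "\<And>j. j \<noteq> i \<Longrightarrow> db j * a i = da j * b i"
    and "lorentz_inner a da = 0" "lorentz_inner b db = c * b i"
  shows "lorentz_inner da b + lorentz_inner a db = c * a i"
proof -
  have r: "db j * a i = da j * b i" if "j \<noteq> i" for j
    using assms(3) that .
  have "a i * b i * (lorentz_inner da b + lorentz_inner a db - c * a i) = 0"
    using exhaust_3[of i]
  proof (elim disjE)
    assume i: "i = 1"
    show ?thesis using r[of 2] r[of 3] assms(4,5) unfolding lorentz_inner_def i by simp algebra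
  next
    assume i: "i = 2"
    show ?thesis using r[of 1] r[of 3] assms(4,5) unfolding lorentz_inner_def i by simp algebra
  next
    assume i: "i = 3"
    show ?thesis using r[of 1] r[of 2] assms(4,5) unfolding lorentz_inner_def i by simp algebra
  qed
  then show ?thesis using assms(1,2) by simp
qed

lemma has_derivative_lorentz_inner:
  assumes "\<And>j. (A j has_derivative DA j) (at x)" "\<And>j. (B j has_derivative DB j) (at x)"
  shows "((\<lambda>y. lorentz_inner (\<lambda>j. A j y) (\<lambda>j. B j y)) has_derivative
           (\<lambda>h. lorentz_inner (\<lambda>j. DA j h) (\<lambda>j. B j x) + lorentz_inner (\<lambda>j. A j x) (\<lambda>j. DB j h))) (at x)"
proof -
  have "((\<lambda>y. lorentz_inner (\<lambda>j. A j y) (\<lambda>j. B j y)) has_derivative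
      (\<lambda>h. A 1 x * DB 1 h + DA 1 h * B 1 x + (A 2 x * DB 2 h + DA 2 h * B 2 x)
           - (A 3 x * DB 3 h + DA 3 h * B 3 x))) (at x)"
    unfolding lorentz_inner_def by (intro has_derivative_add has_derivative_diff has_derivative_mult assms)
  then show ?thesis by (simp add: lorentz_inner_def algebra_simps)
qed

lemma
  assumes "\<And>j. A j differentiable (at x)" "\<And>j. B j differentiable (at x)"
  shows differentiable_lorentz_inner: "(\<lambda>y. lorentz_inner (\<lambda>j. A j y) (\<lambda>j. B j y)) differentiable (at x)"
    and pd_lorentz_inner: "pd i (\<lambda>y. lorentz_inner (\<lambda>j. A j y) (\<lambda>j. B j y)) x
           = lorentz_inner (\<lambda>j. pd i (A j) x) (\<lambda>j. B j x) + lorentz_inner (\<lambda>j. A j x) (\<lambda>j. pd i (B j) x)"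
proof -
  have D: "((\<lambda>y. lorentz_inner (\<lambda>j. A j y) (\<lambda>j. B j y)) has_derivative
      (\<lambda>h. lorentz_inner (\<lambda>j. frechet_derivative (A j) (at x) h) (\<lambda>j. B j x)
         + lorentz_inner (\<lambda>j. A j x) (\<lambda>j. frechet_derivative (B j) (at x) h))) (at x)"
    using assms by (intro has_derivative_lorentz_inner) (simp_all add: frechet_derivative_works)
  show "(\<lambda>y. lorentz_inner (\<lambda>j. A j y) (\<lambda>j. B j y)) differentiable (at x)"
    using D unfolding differentiable_def by blast
  show "pd i (\<lambda>y. lorentz_inner (\<lambda>j. A j y) (\<lambda>j. B j y)) x
      = lorentz_inner (\<lambda>j. pd i (A j) x) (\<lambda>j. B j x) + lorentz_inner (\<lambda>j. A j x) (\<lambda>j. pd i (B j) x)"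
    using pd_eq_derivative[OF D] unfolding pd_def .
qed

lemma
  assumes "smooth_on U g" "open U" "x \<in> U"
  shows smooth_on_differentiable: "g differentiable (at x)"
    and smooth_on_pd_differentiable: "pd i g differentiable (at x)"
proof -
  have "iter_pd [] g differentiable_on U" "iter_pd [i] g differentiable_on U"
    using assms(1) unfolding smooth_on_def by blast+
  then show "g differentiable (at x)" "pd i g differentiable (at x)"
    using assms(2,3) differentiable_on_eq_differentiable_at by auto
qed

lemma cross3_pd_nonzero:
  assumes "triply_orthogonal U f" "x \<in> U"
  shows "cross3 (pd (i+1) f x) (pd (i+2) f x) \<noteq> 0"
  using assms det_3_cyclic[of "\<lambda>j. pd j f x" i] unfolding triply_orthogonal_def by auto

lemma lame_nonzero:
  assumes "triply_orthogonal U f" "x \<in> U"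
  shows "lame f i x \<noteq> 0"
  using assms cross3_pd_nonzero[OF assms] det_3_cyclic[of "\<lambda>j. pd j f x" i]
  unfolding triply_orthogonal_def lame_def unitN_def by auto

lemma differentiable_unitN:
  assumes "triply_orthogonal U f" "open U" "x \<in> U"
  shows "unitN f i differentiable (at x)"
proof -
  have "\<And>k. pd k f differentiable (at x)"
    using assms smooth_on_pd_differentiable unfolding triply_orthogonal_def by blast
  then have "(\<lambda>y. cross3 (pd (i+1) f y) (pd (i+2) f y)) differentiable (at x)"
    using bounded_bilinear.FDERIV[OF bilinear_cross[unfolded bilinear_conv_bounded_bilinear]]
    unfolding differentiable_def by blast
  then show ?thesis
    unfolding unitN_def[abs_def] using cross3_pd_nonzero[OF assms(1,3)]
    by (intro differentiable_scaleR) (auto intro!: derivative_intros differentiable_compose[of norm] differentiable_norm_at)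
qed

lemma differentiable_lame:
  assumes "triply_orthogonal U f" "open U" "x \<in> U"
  shows "lame f i differentiable (at x)"
  unfolding lame_def[abs_def] using assms smooth_on_pd_differentiable differentiable_unitN[OF assms]
  by (intro differentiable_inner) (auto simp: triply_orthogonal_def)

lemma lame_wrt_nonzero:
  assumes "combescure U f fb" "x \<in> U"
  shows "lame_wrt f fb i x \<noteq> 0"
proof
  assume "lame_wrt f fb i x = 0"
  then have "pd i fb x = 0" using assms unfolding combescure_def by simp
  then show False
    using assms det_3_cyclic[of "\<lambda>j. pd j fb x" i] unfolding combescure_def triply_orthogonal_def by auto
qed

lemma differentiable_lame_wrt:
  assumes "combescure U f fb" "triply_orthogonal U f" "open U" "x \<in> U"
  shows "lame_wrt f fb i differentiable (at x)"
  unfolding lame_wrt_def[abs_def] using assms smooth_on_pd_differentiable differentiable_unitN[OF assms(2-4)]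
  by (intro differentiable_inner) (auto simp: combescure_def triply_orthogonal_def)

lemma orthogonal_unitN_imp_zero:
  assumes "triply_orthogonal U f" "x \<in> U" "\<And>i. inner w (unitN f i x) = 0"
  shows "w = 0"
proof -
  have "inner w (cross3 (pd (j+1) f x) (pd (j+2) f x)) = 0" for j
    using assms(3)[of j] cross3_pd_nonzero[OF assms(1,2), of j] unfolding unitN_def by simp
  then have "det (\<chi> i. pd i f x) *\<^sub>R w = 0"
    unfolding det_scaleR_eq_cross3_expansion by simp
  then show ?thesis using assms(1,2) unfolding triply_orthogonal_def by auto
qed

lemma lorentz_lame_pd_lame:
  assumes "guichard_net U f" "open U" "x \<in> U"
  shows "lorentz_inner (\<lambda>j. lame f j x) (\<lambda>j. pd i (lame f j) x) = 0"
proof -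
  have tf: "triply_orthogonal U f" using assms(1) unfolding guichard_net_def by blast
  note dH = differentiable_lame[OF tf assms(2,3)]
  have "pd i (\<lambda>y. lorentz_inner (\<lambda>j. lame f j y) (\<lambda>j. lame f j y)) x = pd i (\<lambda>y. 0) x"
    using assms(1) by (intro pd_cong_open[OF differentiable_lorentz_inner[OF dH dH] assms(2,3)])
      (simp add: guichard_net_def guichard_coeffs_iff_lorentz)
  then show ?thesis
    unfolding pd_lorentz_inner[OF dH dH] by (simp add: pd_def lorentz_inner_def algebra_simps)
qed

lemma lorentz_lame_wrt_pd_lame_wrt:
  assumes "combescure U f fb" "alpha_sq_system U f fb \<alpha>" "triply_orthogonal U f" "open U" "x \<in> U"
  shows "lorentz_inner (\<lambda>j. lame_wrt f fb j x) (\<lambda>j. pd i (lame_wrt f fb j) x)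
           = \<alpha>\<^sup>2 * lame_wrt f fb i x * gam f fb i x"
proof -
  note dB = differentiable_lame_wrt[OF assms(1,3-5)]
  have "smooth_on U fb" using assms(1) unfolding combescure_def triply_orthogonal_def by blast
  note dfb = smooth_on_differentiable[OF this assms(4,5)]
  have "pd i (\<lambda>y. lorentz_inner (\<lambda>j. lame_wrt f fb j y) (\<lambda>j. lame_wrt f fb j y)) x
      = pd i (\<lambda>y. \<alpha>\<^sup>2 * (norm (fb y))\<^sup>2) x"
    using assms(2) unfolding alpha_sq_system_def
    by (intro pd_cong_open[OF differentiable_lorentz_inner[OF dB dB] assms(4,5)])
      (simp add: lorentz_inner_def flip: power2_eq_square)
  also have "\<dots> = \<alpha>\<^sup>2 * (2 * inner (fb x) (pd i fb x))"
  proof -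
    have "(\<lambda>y. (norm (fb y))\<^sup>2) differentiable (at x)"
      unfolding power2_norm_eq_inner by (rule differentiable_inner[OF dfb dfb])
    then show ?thesis by (simp only: pd_const_mult pd_norm_squared[OF dfb])
  qed
  also have "\<dots> = 2 * (\<alpha>\<^sup>2 * lame_wrt f fb i x * gam f fb i x)"
    using assms(1,5) unfolding combescure_def gam_def by simp
  finally show ?thesis
    unfolding pd_lorentz_inner[OF dB dB] by (simp add: lorentz_inner_def algebra_simps)
qed

lemma pd_lame_wrt_mult_lame:
  assumes "combescure U f fb" "triply_orthogonal U f" "x \<in> U" "j \<noteq> i"
  shows "pd i (lame_wrt f fb j) x * lame f i x = pd i (lame f j) x * lame_wrt f fb i x"
proof -
  have "pd i (lame_wrt f fb j) x / lame_wrt f fb i x = pd i (lame f j) x / lame f i x"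
    using assms(1,3,4) unfolding combescure_def rotcoef_def by auto
  then show ?thesis
    using lame_nonzero[OF assms(2,3)] lame_wrt_nonzero[OF assms(1,3)] by (simp add: field_simps)
qed

definition guichard_param :: "(real^3 \<Rightarrow> real^3) \<Rightarrow> (real^3 \<Rightarrow> real^3) \<Rightarrow> real \<Rightarrow> real^3 \<Rightarrow> real" where
  "guichard_param f fb \<alpha> x = (1 / \<alpha>\<^sup>2) * lorentz_inner (\<lambda>j. lame f j x) (\<lambda>j. lame_wrt f fb j x)"

lemma rib_param_guichard_param:
  assumes "open U" "guichard_net U f" "combescure U f fb" "alpha_sq_system U f fb \<alpha>" "\<alpha> \<noteq> 0"
  shows "rib_param U f fb (guichard_param f fb \<alpha>)"
  unfolding rib_param_def
proof (intro ballI conjI allI)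
  fix x i assume x: "x \<in> U"
  have tf: "triply_orthogonal U f" using assms(2) unfolding guichard_net_def by blast
  note dH = differentiable_lame[OF tf assms(1) x] and dB = differentiable_lame_wrt[OF assms(3) tf assms(1) x]
  note dL = differentiable_lorentz_inner[OF dH dB]
  show "guichard_param f fb \<alpha> differentiable (at x)"
    unfolding guichard_param_def[abs_def] using dL by (intro differentiable_mult) simp_all
  have "lorentz_inner (\<lambda>j. pd i (lame f j) x) (\<lambda>j. lame_wrt f fb j x)
      + lorentz_inner (\<lambda>j. lame f j x) (\<lambda>j. pd i (lame_wrt f fb j) x) = \<alpha>\<^sup>2 * gam f fb i x * lame f i x"
    using lame_nonzero[OF tf x] lame_wrt_nonzero[OF assms(3) x] pd_lame_wrt_mult_lame[OF assms(3) tf x]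
      lorentz_lame_pd_lame[OF assms(2,1) x] lorentz_lame_wrt_pd_lame_wrt[OF assms(3,4) tf assms(1) x]
    by (intro lorentz_inner_product_rule_identity) (auto simp: algebra_simps)
  then show "pd i (guichard_param f fb \<alpha>) x = lame f i x * gam f fb i x"
    unfolding guichard_param_def[abs_def] pd_const_mult[OF dL] pd_lorentz_inner[OF dH dB]
    using assms(5) by simp
qed

lemma guichard_ribH_iff:
  assumes "guichard_net U f" "alpha_sq_system U f fb \<alpha>" "\<alpha> \<noteq> 0" "x \<in> U" "fb x \<noteq> 0"
  shows "guichard_coeffs (ribH f fb p) x \<longleftrightarrow> p x = 0 \<or> p x = guichard_param f fb \<alpha> x"
proof -
  define n where "n = (norm (fb x))\<^sup>2"
  define t where "t = 2 * p x / n"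
  have n: "n \<noteq> 0" using assms(5) unfolding n_def by simp
  have HH: "lorentz_inner (\<lambda>j. lame f j x) (\<lambda>j. lame f j x) = 0"
    using assms(1,4) unfolding guichard_net_def guichard_coeffs_iff_lorentz by blast
  have BB: "lorentz_inner (\<lambda>j. lame_wrt f fb j x) (\<lambda>j. lame_wrt f fb j x) = \<alpha>\<^sup>2 * n"
    using assms(2,4) unfolding alpha_sq_system_def n_def lorentz_inner_def by (simp add: power2_eq_square)
  have HB: "lorentz_inner (\<lambda>j. lame f j x) (\<lambda>j. lame_wrt f fb j x) = \<alpha>\<^sup>2 * guichard_param f fb \<alpha> x"
    using assms(3) unfolding guichard_param_def by simp
  have "guichard_coeffs (ribH f fb p) x
      \<longleftrightarrow> lorentz_inner (\<lambda>j. lame f j x - t * lame_wrt f fb j x) (\<lambda>j. lame f j x - t * lame_wrt f fb j x) = 0"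
    unfolding guichard_coeffs_iff_lorentz ribH_def t_def n_def by simp
  also have "\<dots> \<longleftrightarrow> 2 * t * \<alpha>\<^sup>2 * (p x - guichard_param f fb \<alpha> x) = 0"
    unfolding lorentz_inner_diff_scaled HH BB HB using n by (simp add: t_def power2_eq_square field_simps)
  also have "\<dots> \<longleftrightarrow> p x = 0 \<or> p x = guichard_param f fb \<alpha> x"
    using n assms(3) by (simp add: t_def)
  finally show ?thesis .
qed

lemma rib_param_diff_constant:
  assumes "open U" "connected U" "rib_param U f fb \<psi>" "rib_param U f fb \<phi>"
  obtains c where "\<And>x. x \<in> U \<Longrightarrow> \<psi> x - \<phi> x = c"
  using pd_eq_imp_diff_constant[OF assms(1,2)] assms(3,4) unfolding rib_param_def by metis

lemma rib_param_vanishing_imp_zero: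
  assumes "triply_orthogonal U f" "open U" "rib_param U f fb \<psi>" "\<And>y. y \<in> U \<Longrightarrow> \<psi> y = 0" "x \<in> U"
  shows "fb x = 0"
proof (rule orthogonal_unitN_imp_zero[OF assms(1,5)])
  fix i
  have "lame f i x * gam f fb i x = pd i \<psi> x"
    using assms(3,5) unfolding rib_param_def by simp
  also have "\<dots> = pd i (\<lambda>y. 0) x"
    using assms(3,5) by (intro pd_cong_open[OF _ assms(2,5)] assms(4)) (auto simp: rib_param_def)
  finally show "inner (fb x) (unitN f i x) = 0"
    using lame_nonzero[OF assms(1,5)] by (simp add: pd_def gam_def)
qed

lemma guichard_rib_param_unique:
  assumes "open U" "connected U" "guichard_net U f" "combescure U f fb" "alpha_sq_system U f fb \<alpha>"
    and "\<alpha> \<noteq> 0" "\<forall>x\<in>U. fb x \<noteq> 0"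
    and "rib_param U f fb \<psi>" "\<forall>x\<in>U. guichard_coeffs (ribH f fb \<psi>) x" "x \<in> U"
  shows "\<psi> x = guichard_param f fb \<alpha> x"
proof (rule ccontr)
  assume ne: "\<psi> x \<noteq> guichard_param f fb \<alpha> x"
  obtain c where c: "\<And>y. y \<in> U \<Longrightarrow> \<psi> y - guichard_param f fb \<alpha> y = c"
    using rib_param_diff_constant[OF assms(1,2,8) rib_param_guichard_param[OF assms(1,3-6)]] by blast
  \<comment> \<open>The difference is a nonzero constant, so pointwise \<psi> must take the other root 0 of the quadratic.\<close>
  have "\<psi> y = 0" if "y \<in> U" for y
  proof -
    have "\<psi> y \<noteq> guichard_param f fb \<alpha> y"
      using c[OF that] c[OF assms(10)] ne by simp
    then show ?thesis
      using guichard_ribH_iff[OF assms(3,5,6) that, of \<psi>] assms(9,7) that by simp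
  qed
  then have "fb x = 0"
    using rib_param_vanishing_imp_zero[OF _ assms(1,8) _ assms(10)] assms(3) unfolding guichard_net_def by blast
  then show False using assms(7,10) by blast
qed

theorem theorem5p3:
  fixes U :: "(real^3) set" and f fb :: "real^3 \<Rightarrow> real^3" and \<alpha> :: real
  assumes "open U" and "connected U"
    and "guichard_net U f"
    and "combescure U f fb"
    and "alpha_sq_system U f fb \<alpha>"
    and "\<alpha> \<noteq> 0"
    and "\<forall>x\<in>U. fb x \<noteq> 0"
  shows "rib_param U f fb
           (\<lambda>x. (1 / \<alpha>\<^sup>2) * (lame f 1 x * lame_wrt f fb 1 x + lame f 2 x * lame_wrt f fb 2 x
                               - lame f 3 x * lame_wrt f fb 3 x))
       \<and> (\<forall>x\<in>U. guichard_coeffs (ribH f fb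
           (\<lambda>x. (1 / \<alpha>\<^sup>2) * (lame f 1 x * lame_wrt f fb 1 x + lame f 2 x * lame_wrt f fb 2 x
                               - lame f 3 x * lame_wrt f fb 3 x))) x)
       \<and> (\<forall>\<psi>. rib_param U f fb \<psi> \<and> (\<forall>x\<in>U. guichard_coeffs (ribH f fb \<psi>) x)
            \<longrightarrow> (\<forall>x\<in>U. rib f fb \<psi> x = rib f fb
                 (\<lambda>x. (1 / \<alpha>\<^sup>2) * (lame f 1 x * lame_wrt f fb 1 x + lame f 2 x * lame_wrt f fb 2 x
                                     - lame f 3 x * lame_wrt f fb 3 x)) x))"
proof -
  have \<phi>: "(\<lambda>x. (1 / \<alpha>\<^sup>2) * (lame f 1 x * lame_wrt f fb 1 x + lame f 2 x * lame_wrt f fb 2 x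
                               - lame f 3 x * lame_wrt f fb 3 x)) = guichard_param f fb \<alpha>"
    by (simp add: fun_eq_iff guichard_param_def lorentz_inner_def)
  show ?thesis
    unfolding \<phi>
  proof (intro conjI allI impI ballI)
    show "rib_param U f fb (guichard_param f fb \<alpha>)"
      by (rule rib_param_guichard_param[OF assms(1,3-6)])
    show "guichard_coeffs (ribH f fb (guichard_param f fb \<alpha>)) x" if "x \<in> U" for x
      using guichard_ribH_iff[OF assms(3,5,6) that] assms(7) that by blast
    show "rib f fb \<psi> x = rib f fb (guichard_param f fb \<alpha>) x"
      if "rib_param U f fb \<psi> \<and> (\<forall>x\<in>U. guichard_coeffs (ribH f fb \<psi>) x)" "x \<in> U" for \<psi> x
      using guichard_rib_param_unique[OF assms] that unfolding rib_def by simp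
  qed
qed

end
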